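(* Let $m\ge1$ and $n\ge2$ be integers, and let $p_{m,r}(n)$, $0\le r\le m$, be the unique numbers such that $S(m,n,\alpha)=\sum_{r=0}^m p_{m,r}(n)\cot^r\alpha$ for all real $\alpha\notin\pi\mathbb{Z}$. Then $$p_{2m,0}(n)=S(2m,n,\pi/2),$$ and for $1\le r\le m$, $$p_{m,r}(n)=\frac{1}{r\,(m-1)!}\sum_{k=r}^m n^kA_m^{(k)}T_k^{(r)}.$$
   Context: $S(m,n,\alpha)=\sum_{k=0}^{n-1}\cot^m\frac{\alpha+k\pi}{n}$, which is a polynomial of degree at most $m$ in $\cot\alpha$. The arctangent numbers $A_m^{(k)}$ are defined by $\frac{(\arctan z)^k}{k!}=\sum_{m\ge k}\frac{A_m^{(k)}}{m!}z^m$. The higher-order tangent numbers $T_k^{(r)}$ are defined by $\tan^r z=\sum_{k\ge r}\frac{T_k^{(r)}}{k!}z^k$. *)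

theory Defs
  imports Complex_Main "HOL-Computational_Algebra.Formal_Power_Series"
begin

definition Ssum :: "nat \<Rightarrow> nat \<Rightarrow> real \<Rightarrow> real" where
  "Ssum m n \<alpha> = (\<Sum>k<n. cot ((\<alpha> + real k * pi) / real n) ^ m)"

definition fps_arctan :: "real fps" where
  "fps_arctan = Abs_fps (\<lambda>i. if odd i then (-1) ^ (i div 2) / real i else 0)"

text \<open>Arctangent numbers: (arctan z)^k / k! = sum_m A_m^(k) z^m / m!\<close>
definition arctan_num :: "nat \<Rightarrow> nat \<Rightarrow> real" where
  "arctan_num m k = fact m * (fps_nth (fps_arctan ^ k) m / fact k)"

text \<open>Higher-order tangent numbers: tan^r z = sum_k T_k^(r) z^k / k!\<close>
definition tan_num :: "nat \<Rightarrow> nat \<Rightarrow> real" where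
  "tan_num k r = fact k * (fps_nth (fps_tan (1::real) ^ r) k)"

end

(*
  Write (1 + i t)^n = A_n(t) + i B_n(t), put x = cot alpha and theta_k = (alpha + k pi)/n.
  Since cos (n theta) = cos^n theta A_n(tan theta) and sin (n theta) = cos^n theta B_n(tan theta),
  the n distinct numbers tan theta_k are the roots of A_n - x B_n, a polynomial of degree at most n
  with constant term 1; hence A_n - x B_n = prod_k (1 - t cot theta_k), and S(m,n,alpha) is minus
  the coefficient of t^m in the logarithmic derivative t (d/dt) log (A_n - x B_n).
  Factoring A_n - x B_n = A_n (1 - x V) with V = B_n / A_n and expanding log (1 - x V) in powers
  of x shows that S(m,n,alpha) is a polynomial in cot alpha whose coefficient of x^r, r >= 1, is
  (m/r) [t^m] V^r. Both V and tan (n arctan t) solve (1 + t^2) f' = n (1 + f^2) with f(0) = 0,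
  so they coincide, and composing the series tan^r with n arctan t expresses [t^m] V^r through
  arctangent and tangent numbers. The coefficient of cot^0 is read off at alpha = pi/2.
*)

theory Submission
  imports Defs "HOL-Computational_Algebra.Polynomial_FPS"
begin

unbundle fps_syntax

lemma fps_tan_deriv': "fps_deriv (fps_tan c) = fps_const c * (1 + fps_tan c ^ 2)"
proof -
  have cos0: "fps_cos c $ 0 \<noteq> 0" by (simp add: fps_cos_def)
  have ic: "fps_cos c * inverse (fps_cos c) = 1" using cos0 by (rule inverse_mult_eq_1')
  have "1 + fps_tan c ^ 2 = (fps_cos c * inverse (fps_cos c)) ^ 2 + (fps_sin c * inverse (fps_cos c)) ^ 2"
    by (simp add: ic fps_tan_def fps_divide_unit[OF cos0])
  also have "\<dots> = (fps_cos c ^ 2 + fps_sin c ^ 2) * inverse (fps_cos c) ^ 2"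
    by (simp add: power_mult_distrib distrib_right)
  also have "\<dots> = inverse (fps_cos c ^ 2)" by (simp add: fps_sin_cos_sum_of_squares fps_inverse_power)
  finally show ?thesis using cos0 by (simp add: fps_tan_deriv fps_divide_unit)
qed

lemma fps_tan_compose_deriv:
  assumes "b $ 0 = 0"
  shows "fps_deriv (fps_tan c oo b) = fps_const c * (1 + (fps_tan c oo b) ^ 2) * fps_deriv b"
  by (simp add: fps_compose_deriv[OF assms] fps_tan_deriv' fps_compose_add_distrib
      fps_compose_power[OF assms] fps_compose_mult_distrib[OF assms])

lemma fps_riccati_unique:
  fixes f g :: "'a::field_char_0 fps"
  assumes f: "fps_deriv f * (1 + fps_X ^ 2) = fps_const c * (1 + f ^ 2)"
      and g: "fps_deriv g * (1 + fps_X ^ 2) = fps_const c * (1 + g ^ 2)"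
      and "f $ 0 = g $ 0"
  shows "f = g"
proof -
  have "\<forall>i\<le>k. f $ i = g $ i" for k
  proof (induction k)
    case 0
    then show ?case using \<open>f $ 0 = g $ 0\<close> by simp
  next
    case (Suc k)
    txt \<open>The coefficient of \<open>X ^ k\<close> in the equation determines \<open>f $ (k + 1)\<close>
      from lower coefficients.\<close>
    have lhs_nth: "(fps_deriv h * (1 + fps_X ^ 2)) $ k
        = of_nat (k + 1) * h $ (k + 1) + (if k < 2 then 0 else fps_deriv h $ (k - 2))" for h :: "'a fps"
      by (simp add: distrib_left fps_X_power_mult_right_nth)
    have "(f ^ 2) $ k = (g ^ 2) $ k"
      using Suc.IH by (auto simp: power2_eq_square fps_mult_nth intro!: sum.cong)
    moreover have "k \<ge> 2 \<Longrightarrow> fps_deriv f $ (k - 2) = fps_deriv g $ (k - 2)"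
      using Suc.IH by (simp del: fps_deriv_nth add: fps_deriv_def)
    moreover have "(1 + of_nat k :: 'a) \<noteq> 0"
      by (metis of_nat_Suc of_nat_eq_0_iff nat.distinct(1))
    ultimately have "f $ (k + 1) = g $ (k + 1)"
      using arg_cong[OF f, of "\<lambda>h. h $ k"] arg_cong[OF g, of "\<lambda>h. h $ k"]
      unfolding lhs_nth
      by (auto simp del: fps_deriv_nth split: if_splits) (metis mult_left_cancel add_right_cancel)+
    then show ?case using Suc.IH by (metis Suc_eq_plus1 le_Suc_eq)
  qed
  then show ?thesis by (intro fps_ext) auto
qed

lemma fps_riccati_quotient:
  fixes A B :: "'a::field fps"
  assumes A0: "A $ 0 \<noteq> 0"
    and wronskian: "(1 + fps_X ^ 2) * (A * fps_deriv B - B * fps_deriv A) = c * (A ^ 2 + B ^ 2)"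
  shows "fps_deriv (B / A) * (1 + fps_X ^ 2) = c * (1 + (B / A) ^ 2)"
proof -
  define V where "V = B / A"
  have AV: "A * V = B"
    using inverse_mult_eq_1'[OF A0] by (simp add: V_def fps_divide_unit[OF A0] mult.left_commute)
  have "A ^ 2 * (fps_deriv V * (1 + fps_X ^ 2)) =
      (1 + fps_X ^ 2) * (A * fps_deriv (A * V) - A * V * fps_deriv A)"
    by (simp add: power2_eq_square algebra_simps)
  also have "\<dots> = A ^ 2 * (c * (1 + V ^ 2))"
    unfolding AV wronskian by (simp add: AV[symmetric] power2_eq_square algebra_simps)
  finally show ?thesis
    using A0 by (simp add: V_def fps_nonzeroI[of A 0])
qed

lemma fps_X_deriv_nth: "(fps_X * fps_deriv f) $ m = of_nat m * f $ m"
  by (cases m) (simp_all add: algebra_simps)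

lemma fps_X_deriv_mult_power_nth:
  fixes V :: "'a::field_char_0 fps"
  shows "(fps_X * fps_deriv V * V ^ j) $ m = of_nat m / of_nat (Suc j) * (V ^ Suc j) $ m"
proof -
  have "fps_X * fps_deriv (V ^ Suc j) = fps_const (of_nat (Suc j)) * (fps_X * fps_deriv V * V ^ j)"
    by (simp only: fps_deriv_power' diff_Suc_1 fps_of_nat mult_ac)
  then have "of_nat m * (V ^ Suc j) $ m = of_nat (Suc j) * (fps_X * fps_deriv V * V ^ j) $ m"
    by (metis fps_X_deriv_nth fps_mult_left_const_nth)
  then show ?thesis by (simp add: field_simps del: of_nat_Suc)
qed

definition fps_X_log_deriv :: "'a::field fps \<Rightarrow> 'a fps" where
  "fps_X_log_deriv f = fps_X * fps_deriv f / f"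

lemma fps_X_log_deriv_mult:
  fixes f g :: "'a::field fps"
  assumes f0: "f $ 0 \<noteq> 0" and g0: "g $ 0 \<noteq> 0"
  shows "fps_X_log_deriv (f * g) = fps_X_log_deriv f + fps_X_log_deriv g"
proof -
  have "fps_X * fps_deriv (f * g) * inverse (f * g)
      = fps_X * fps_deriv f * inverse f * (g * inverse g) +
        fps_X * fps_deriv g * inverse g * (f * inverse f)"
    by (simp add: fps_inverse_mult algebra_simps)
  then show ?thesis
    using f0 g0 by (simp add: fps_X_log_deriv_def fps_divide_unit inverse_mult_eq_1')
qed

lemma fps_X_log_deriv_prod:
  fixes f :: "'b \<Rightarrow> 'a::field fps"
  assumes "finite K" and "\<And>k. k \<in> K \<Longrightarrow> f k $ 0 \<noteq> 0"
  shows "fps_X_log_deriv (\<Prod>k\<in>K. f k) = (\<Sum>k\<in>K. fps_X_log_deriv (f k))"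
  using assms
proof (induction K rule: finite_induct)
  case empty
  then show ?case by (simp add: fps_X_log_deriv_def)
next
  case (insert a K)
  have "(\<Prod>k\<in>K. f k) $ 0 = (\<Prod>k\<in>K. f k $ 0)"
    using \<open>finite K\<close> by (induction K rule: finite_induct) simp_all
  with insert show ?case by (simp add: fps_X_log_deriv_mult)
qed

lemma fps_X_log_deriv_linear_nth:
  fixes y :: "'a::field"
  assumes "m \<ge> 1"
  shows "fps_X_log_deriv (1 - fps_const y * fps_X) $ m = - (y ^ m)"
proof -
  define G where "G = Abs_fps (\<lambda>i. if i = 0 then 0 else y ^ i)"
  have G: "(1 - fps_const y * fps_X) * G = fps_const y * fps_X"
  proof (rule fps_ext)
    show "((1 - fps_const y * fps_X) * G) $ i = (fps_const y * fps_X) $ i" for i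
      by (cases i) (auto simp: G_def algebra_simps)
  qed
  then have "fps_X_log_deriv (1 - fps_const y * fps_X)
      = - ((1 - fps_const y * fps_X) * G) * inverse (1 - fps_const y * fps_X)"
    by (simp add: fps_X_log_deriv_def fps_divide_unit fps_const_neg[symmetric] mult.commute
        del: fps_const_neg)
  also have "\<dots> = - G * ((1 - fps_const y * fps_X) * inverse (1 - fps_const y * fps_X))"
    by (simp add: mult_ac)
  finally have "fps_X_log_deriv (1 - fps_const y * fps_X) = - G"
    by (simp add: inverse_mult_eq_1')
  with assms show ?thesis by (simp add: G_def)
qed

lemma fps_X_log_deriv_one_minus_nth:
  fixes V :: "'a::field_char_0 fps"
  assumes V0: "V $ 0 = 0" and "m \<ge> 1"
  shows "fps_X_log_deriv (1 - fps_const c * V) $ m =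
           - (\<Sum>r=1..m. c ^ r * of_nat m / of_nat r * (V ^ r) $ m)"
proof -
  define W where "W = inverse (1 - fps_const c * V)"
  have W: "W * (1 - fps_const c * V) = 1"
    unfolding W_def using V0 by (intro inverse_mult_eq_1) simp
  have log_deriv: "fps_X_log_deriv (1 - fps_const c * V) = - (fps_const c * (fps_X * fps_deriv V * W))"
    using V0 by (simp add: fps_X_log_deriv_def fps_divide_unit W_def mult_ac)
  have geometric: "W = (\<Sum>j<m. (fps_const c * V) ^ j) + (fps_const c * V) ^ m * W"
  proof -
    have "W * (1 - (fps_const c * V) ^ m) = W * (1 - fps_const c * V) * (\<Sum>j<m. (fps_const c * V) ^ j)"
      by (simp add: one_diff_power_eq mult.assoc)
    then show ?thesis unfolding W by (simp add: algebra_simps)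
  qed
  txt \<open>Since \<open>V ^ m = O(X ^ m)\<close>, only the first \<open>m\<close> terms of the geometric series
    \<open>W = 1 / (1 - c V)\<close> contribute to the coefficient of \<open>X ^ m\<close>.\<close>
  have tail: "(fps_X * fps_deriv V * ((fps_const c * V) ^ m * W)) $ m = 0"
  proof -
    have "\<forall>i\<le>m. (fps_X * V ^ m) $ i = 0"
      using startsby_zero_power_prefix[OF V0, of m] by auto
    then have "((fps_X * V ^ m) * H) $ m = 0" for H
      by (simp add: fps_mult_nth)
    moreover have "fps_X * fps_deriv V * ((fps_const c * V) ^ m * W) =
        (fps_X * V ^ m) * (fps_const (c ^ m) * fps_deriv V * W)"
      by (simp add: power_mult_distrib fps_const_power algebra_simps)
    ultimately show ?thesis by metis
  qed
  have "(fps_X * fps_deriv V * W) $ m = (\<Sum>j<m. c ^ j * (fps_X * fps_deriv V * V ^ j) $ m)"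
  proof -
    have "fps_X * fps_deriv V * W = (\<Sum>j<m. fps_const (c ^ j) * (fps_X * fps_deriv V * V ^ j))
        + fps_X * fps_deriv V * ((fps_const c * V) ^ m * W)"
      by (subst geometric) (simp add: algebra_simps sum_distrib_left power_mult_distrib fps_const_power)
    then show ?thesis using tail by (simp add: fps_sum_nth)
  qed
  also have "\<dots> = (\<Sum>j<m. c ^ j * (of_nat m / of_nat (Suc j) * (V ^ Suc j) $ m))"
    by (simp add: fps_X_deriv_mult_power_nth del: of_nat_Suc)
  finally have "c * (fps_X * fps_deriv V * W) $ m = (\<Sum>r=1..m. c ^ r * of_nat m / of_nat r * (V ^ r) $ m)"
    by (simp add: sum_distrib_left sum.atLeast1_atMost_eq mult.assoc del: of_nat_Suc)
  then show ?thesis by (simp add: log_deriv)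
qed

lemma fps_of_poly_linear: "fps_of_poly [:1, - c:] = 1 - fps_const (c :: 'a::comm_ring_1) * fps_X"
  by (intro fps_ext) (simp add: coeff_pCons split: nat.split)

lemma fps_arctan_nth_0 [simp]: "fps_arctan $ 0 = 0"
  by (simp add: fps_arctan_def)

lemma fps_arctan_deriv: "fps_deriv fps_arctan * (1 + fps_X ^ 2) = 1"
proof (rule fps_ext)
  fix k
  have deriv_nth: "fps_deriv fps_arctan $ i = (if even i then (-1) ^ (i div 2) else 0)" for i
    by (auto simp: fps_arctan_def)
  have "(fps_deriv fps_arctan * (1 + fps_X ^ 2)) $ k
        = fps_deriv fps_arctan $ k + (if k < 2 then 0 else fps_deriv fps_arctan $ (k - 2))"
    by (simp add: distrib_left fps_X_power_mult_right_nth del: fps_deriv_nth)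
  also have "\<dots> = (1 :: real fps) $ k"
  proof (cases "k < 2")
    case True
    then show ?thesis by (cases k) (auto simp: fps_arctan_def)
  next
    case False
    then obtain j where "k = j + 2" by (metis add.commute le_Suc_ex not_less)
    then show ?thesis unfolding deriv_nth by (auto simp: power_add)
  qed
  finally show "(fps_deriv fps_arctan * (1 + fps_X ^ 2)) $ k = (1 :: real fps) $ k" .
qed

definition fps_tan_mult_arctan :: "nat \<Rightarrow> real fps" where
  "fps_tan_mult_arctan n = fps_tan 1 oo (fps_const (real n) * fps_arctan)"

lemma fps_tan_mult_arctan_nth_0 [simp]: "fps_tan_mult_arctan n $ 0 = 0"
  by (simp add: fps_tan_mult_arctan_def fps_tan_def fps_divide_unit)

lemma fps_tan_mult_arctan_ode:
  "fps_deriv (fps_tan_mult_arctan n) * (1 + fps_X ^ 2) =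
     fps_const (real n) * (1 + fps_tan_mult_arctan n ^ 2)"
proof -
  have "fps_deriv (fps_tan_mult_arctan n) * (1 + fps_X ^ 2) =
      fps_const (real n) * (1 + fps_tan_mult_arctan n ^ 2) * (fps_deriv fps_arctan * (1 + fps_X ^ 2))"
    by (simp add: fps_tan_mult_arctan_def fps_tan_compose_deriv mult_ac)
  then show ?thesis by (simp add: fps_arctan_deriv)
qed

lemma fps_tan_mult_arctan_power_nth:
  "(fps_tan_mult_arctan n ^ r) $ m =
     (\<Sum>k=r..m. (fps_tan 1 ^ r) $ k * (real n ^ k * (fps_arctan ^ k) $ m))"
proof -
  define b where "b = fps_const (real n) * fps_arctan"
  have b0: "b $ 0 = 0" by (simp add: b_def)
  have "(fps_tan_mult_arctan n ^ r) $ m = ((fps_tan 1 ^ r) oo b) $ m"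
    by (simp add: fps_tan_mult_arctan_def b_def[symmetric] fps_compose_power[OF b0])
  also have "\<dots> = (\<Sum>k=0..m. (fps_tan 1 ^ r) $ k * (real n ^ k * (fps_arctan ^ k) $ m))"
    by (simp add: fps_compose_nth b_def power_mult_distrib fps_const_power)
  also have "\<dots> = (\<Sum>k=r..m. (fps_tan 1 ^ r) $ k * (real n ^ k * (fps_arctan ^ k) $ m))"
    using startsby_zero_power_prefix[of "fps_tan (1::real)" r]
    by (intro sum.mono_neutral_right) (auto simp: fps_tan_def fps_divide_unit)
  finally show ?thesis .
qed

text \<open>\<open>(1 + i t) ^ j = cos_tan_poly j + i sin_tan_poly j\<close>.\<close>
fun cos_tan_poly :: "nat \<Rightarrow> 'a::comm_ring_1 poly"
  and sin_tan_poly :: "nat \<Rightarrow> 'a::comm_ring_1 poly" where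
  "cos_tan_poly 0 = 1"
| "cos_tan_poly (Suc j) = cos_tan_poly j - [:0, 1:] * sin_tan_poly j"
| "sin_tan_poly 0 = 0"
| "sin_tan_poly (Suc j) = sin_tan_poly j + [:0, 1:] * cos_tan_poly j"

lemma coeff_0_cos_tan_poly [simp]: "coeff (cos_tan_poly j) 0 = 1"
  by (induction j) simp_all

lemma coeff_0_sin_tan_poly [simp]: "coeff (sin_tan_poly j) 0 = 0"
  by (induction j) simp_all

lemma degree_cos_sin_tan_poly:
  "degree (cos_tan_poly j :: 'a::comm_ring_1 poly) \<le> j \<and> degree (sin_tan_poly j :: 'a poly) \<le> j"
proof (induction j)
  case 0
  then show ?case by simp
next
  case (Suc j)
  have X_mult: "degree ([:0, 1:] * p) \<le> Suc (degree p)" for p :: "'a poly"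
    using degree_mult_le[of "[:0, 1:]" p] by simp
  show ?case
    using Suc X_mult[of "cos_tan_poly j"] X_mult[of "sin_tan_poly j"]
    by (auto intro!: order.trans[OF degree_diff_le_max] order.trans[OF degree_add_le_max])
qed

lemma poly_cos_sin_tan_poly:
  assumes "cos t \<noteq> 0"
  shows "poly (cos_tan_poly j) (tan t) = cos (real j * t) / cos t ^ j \<and>
         poly (sin_tan_poly j) (tan t) = sin (real j * t) / cos t ^ j"
proof (induction j)
  case 0
  then show ?case by simp
next
  case (Suc j)
  have "real (Suc j) * t = real j * t + t" by (simp add: algebra_simps)
  with Suc assms show ?case
    by (simp add: cos_add sin_add tan_def diff_divide_distrib add_divide_distrib)
qed

lemma cos_sin_tan_poly_wronskian:
  fixes j :: nat
  defines "A \<equiv> cos_tan_poly j :: 'a::idom poly" and "B \<equiv> sin_tan_poly j :: 'a poly"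
  shows "(1 + [:0, 1:] ^ 2) * (A * pderiv B - B * pderiv A) = of_nat j * (A ^ 2 + B ^ 2)"
  unfolding A_def B_def
proof (induction j)
  case 0
  then show ?case by simp
next
  case (Suc j)
  define X :: "'a poly" where "X = [:0, 1:]"
  define A' B' :: "'a poly" where "A' = cos_tan_poly j" and "B' = sin_tan_poly j"
  have A: "cos_tan_poly (Suc j) = A' - X * B'" and B: "sin_tan_poly (Suc j) = B' + X * A'"
    by (simp_all add: X_def A'_def B'_def)
  have IH: "(1 + X ^ 2) * (A' * pderiv B' - B' * pderiv A') = of_nat j * (A' ^ 2 + B' ^ 2)"
    using Suc.IH by (simp add: X_def A'_def B'_def)
  have "pderiv X = 1" by (simp add: X_def pderiv_pCons)
  then have "(A' - X * B') * pderiv (B' + X * A') - (B' + X * A') * pderiv (A' - X * B')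
      = (1 + X ^ 2) * (A' * pderiv B' - B' * pderiv A') + (A' ^ 2 + B' ^ 2)"
    by (simp add: pderiv_mult pderiv_add pderiv_diff power2_eq_square algebra_simps)
  then have "(1 + X ^ 2) * ((A' - X * B') * pderiv (B' + X * A') - (B' + X * A') * pderiv (A' - X * B'))
      = (1 + X ^ 2) * (of_nat j * (A' ^ 2 + B' ^ 2)) + (1 + X ^ 2) * (A' ^ 2 + B' ^ 2)"
    by (simp only: IH distrib_left flip: mult.assoc)
  also have "\<dots> = of_nat (Suc j) * ((A' - X * B') ^ 2 + (B' + X * A') ^ 2)"
    by (simp add: power2_eq_square algebra_simps)
  finally show ?case unfolding A B by (simp add: X_def)
qed

lemma fps_tan_mult_arctan_eq_quotient:
  "fps_tan_mult_arctan n =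
     fps_of_poly (sin_tan_poly n) / fps_of_poly (cos_tan_poly n)"
proof (rule fps_riccati_unique)
  define A B :: "real poly" where "A = cos_tan_poly n" and "B = sin_tan_poly n"
  have A0: "fps_of_poly A $ 0 \<noteq> 0" and B0: "fps_of_poly B $ 0 = 0"
    by (simp_all add: A_def B_def)
  have "(1 + fps_X ^ 2) *
        (fps_of_poly A * fps_deriv (fps_of_poly B) - fps_of_poly B * fps_deriv (fps_of_poly A))
      = fps_const (real n) * (fps_of_poly A ^ 2 + fps_of_poly B ^ 2)"
    using arg_cong[OF cos_sin_tan_poly_wronskian[of n], of fps_of_poly]
    by (simp add: A_def B_def fps_of_poly_simps fps_of_nat of_nat_poly)
  from fps_riccati_quotient[OF A0 this]
  show "fps_deriv (fps_of_poly B / fps_of_poly A) * (1 + fps_X ^ 2) =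
      fps_const (real n) * (1 + (fps_of_poly B / fps_of_poly A) ^ 2)" .
  show "fps_tan_mult_arctan n $ 0 = (fps_of_poly B / fps_of_poly A) $ 0"
    using A0 B0 by (simp add: fps_divide_unit)
qed (rule fps_tan_mult_arctan_ode)

lemma shifted_angle_bounds:
  fixes \<alpha> :: real
  assumes "0 < \<alpha>" "\<alpha> < pi / 2" "k < n"
  shows "0 < (\<alpha> + real k * pi) / real n" "(\<alpha> + real k * pi) / real n < pi"
proof -
  show "0 < (\<alpha> + real k * pi) / real n"
    using assms by (intro divide_pos_pos add_pos_nonneg) auto
  have "(real k + 1) * pi \<le> real n * pi"
    using assms by (intro mult_right_mono) auto
  then show "(\<alpha> + real k * pi) / real n < pi"
    using assms by (simp add: divide_less_eq algebra_simps)
qed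

lemma cos_shifted_angle_nonzero:
  fixes \<alpha> :: real
  assumes "0 < \<alpha>" "\<alpha> < pi / 2" "k < n"
  shows "cos ((\<alpha> + real k * pi) / real n) \<noteq> 0"
proof
  assume "cos ((\<alpha> + real k * pi) / real n) = 0"
  then obtain i :: int where "(\<alpha> + real k * pi) / real n = of_int i * (pi / 2)"
    by (auto simp: cos_zero_iff_int)
  then have "2 * \<alpha> = of_int (i * int n - 2 * int k) * pi"
    using assms by (simp add: field_simps)
  moreover have "0 < 2 * \<alpha>" "2 * \<alpha> < pi"
    using assms by auto
  ultimately have "0 < i * int n - 2 * int k" "i * int n - 2 * int k < 1"
    by (auto simp: zero_less_mult_iff mult_less_cancel_right2 simp del: of_int_diff)
  then show False by linarith
qed

lemma inj_on_tan_shifted_angles: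
  fixes \<alpha> :: real
  assumes "0 < \<alpha>" "\<alpha> < pi / 2"
  shows "inj_on (\<lambda>k. tan ((\<alpha> + real k * pi) / real n)) {..<n}"
proof (rule inj_onI)
  fix j k assume j: "j \<in> {..<n}" and k: "k \<in> {..<n}"
    and same_tan: "tan ((\<alpha> + real j * pi) / real n) = tan ((\<alpha> + real k * pi) / real n)"
  let ?\<theta> = "\<lambda>k. (\<alpha> + real k * pi) / real n"
  have "tan (?\<theta> j) \<noteq> 0"
    using shifted_angle_bounds[OF assms, of j n] cos_shifted_angle_nonzero[OF assms, of j n]
      sin_gt_zero[of "?\<theta> j"] j
    by (auto simp: tan_eq_0_cos_sin)
  then obtain i :: int where "?\<theta> j = ?\<theta> k + of_int i * pi"
    by (rule tan_eq[OF same_tan])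
  moreover have "\<bar>?\<theta> j - ?\<theta> k\<bar> < pi"
    using shifted_angle_bounds[OF assms, of j n] shifted_angle_bounds[OF assms, of k n] j k by auto
  ultimately have "i = 0"
    by (auto simp: abs_mult)
  with \<open>?\<theta> j = ?\<theta> k + of_int i * pi\<close> show "j = k"
    using j by (simp add: divide_right_mono)
qed

lemma cos_sin_tan_poly_factorization:
  fixes \<alpha> :: real
  assumes \<alpha>: "0 < \<alpha>" "\<alpha> < pi / 2" and "n \<ge> 1"
  shows "cos_tan_poly n - smult (cot \<alpha>) (sin_tan_poly n) =
           (\<Prod>k<n. [:1, - cot ((\<alpha> + real k * pi) / real n):])"
    (is "?P = ?Q")
proof -
  define \<theta> where "\<theta> k = (\<alpha> + real k * pi) / real n" for k
  define t where "t k = tan (\<theta> k)" for k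
  have \<theta>: "0 < \<theta> k" "\<theta> k < pi" "cos (\<theta> k) \<noteq> 0" if "k < n" for k
    using shifted_angle_bounds[OF \<alpha> that] cos_shifted_angle_nonzero[OF \<alpha> that] by (simp_all add: \<theta>_def)
  have "sin (\<theta> k) \<noteq> 0" if "k < n" for k
    using \<theta>[OF that] sin_gt_zero by force
  then have t_nonzero: "t k \<noteq> 0" and cot_t: "cot (\<theta> k) * t k = 1" if "k < n" for k
    using that \<theta>(3)[OF that] by (simp_all add: t_def tan_def cot_def)
  have card: "card (insert 0 (t ` {..<n})) = n + 1"
    using inj_on_tan_shifted_angles[OF \<alpha>, of n] t_nonzero
    by (subst card_insert_disjoint) (auto simp: card_image t_def \<theta>_def)
  have deg_P: "degree ?P \<le> n"
    using degree_cos_sin_tan_poly[of n]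
    by (auto intro: order.trans[OF degree_diff_le_max] order.trans[OF degree_smult_le])
  have "degree ?Q \<le> (\<Sum>k<n. degree [:1, - cot (\<theta> k):])"
    using degree_prod_sum_le[of "{..<n}" "\<lambda>k. [:1, - cot (\<theta> k):]"] by (simp add: o_def \<theta>_def)
  also have "\<dots> \<le> (\<Sum>k<n. 1)"
    by (intro sum_mono) simp
  finally have deg_Q: "degree ?Q \<le> n" by simp
  have roots: "poly ?P (t k) = 0 \<and> poly ?Q (t k) = 0" if "k < n" for k
  proof
    have "real n * \<theta> k = \<alpha> + real k * pi"
      using \<open>n \<ge> 1\<close> by (simp add: \<theta>_def)
    then have "poly ?P (t k) = (cos (\<alpha> + real k * pi) - cot \<alpha> * sin (\<alpha> + real k * pi)) / cos (\<theta> k) ^ n"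
      using poly_cos_sin_tan_poly[OF \<theta>(3)[OF that], of n] by (simp add: t_def diff_divide_distrib)
    also have "cos (\<alpha> + real k * pi) - cot \<alpha> * sin (\<alpha> + real k * pi) = 0"
      using sin_gt_zero[of \<alpha>] \<alpha> by (simp add: cos_add sin_add cot_def)
    finally show "poly ?P (t k) = 0" by simp
    show "poly ?Q (t k) = 0"
      unfolding poly_prod using that cot_t[OF that]
      by (intro prod_zero) (auto simp: \<theta>_def algebra_simps intro!: bexI[of _ k])
  qed
  show ?thesis
    using card deg_P deg_Q roots
    by (intro poly_eqI_degree[of "insert 0 (t ` {..<n})"]) (auto simp: poly_prod poly_0_coeff_0)
qed

lemma Ssum_eq_neg_fps_X_log_deriv:
  fixes \<alpha> :: real
  assumes \<alpha>: "0 < \<alpha>" "\<alpha> < pi / 2" and "n \<ge> 1" "m \<ge> 1"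
  shows "Ssum m n \<alpha> =
    - fps_X_log_deriv (fps_of_poly (cos_tan_poly n - smult (cot \<alpha>) (sin_tan_poly n))) $ m"
proof -
  define y where "y k = cot ((\<alpha> + real k * pi) / real n)" for k
  have "fps_of_poly (cos_tan_poly n - smult (cot \<alpha>) (sin_tan_poly n)) =
      (\<Prod>k<n. 1 - fps_const (y k) * fps_X)"
    by (simp add: cos_sin_tan_poly_factorization[OF \<alpha> \<open>n \<ge> 1\<close>] fps_of_poly_prod fps_of_poly_linear y_def)
  then have "fps_X_log_deriv (fps_of_poly (cos_tan_poly n - smult (cot \<alpha>) (sin_tan_poly n))) =
      (\<Sum>k<n. fps_X_log_deriv (1 - fps_const (y k) * fps_X))"
    by (simp add: fps_X_log_deriv_prod)
  then show ?thesis
    using \<open>m \<ge> 1\<close> by (simp add: fps_sum_nth fps_X_log_deriv_linear_nth Ssum_def y_def sum_negf)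
qed

text \<open>\<open>cot_sum_coeff m n r\<close> is the coefficient \<open>p_{m,r}(n)\<close> of the statement.\<close>
definition cot_sum_coeff :: "nat \<Rightarrow> nat \<Rightarrow> nat \<Rightarrow> real" where
  "cot_sum_coeff m n r =
     (if r = 0 then - fps_X_log_deriv (fps_of_poly (cos_tan_poly n)) $ m
      else real m / real r * (fps_tan_mult_arctan n ^ r) $ m)"

lemma Ssum_eq_cot_poly:
  fixes \<alpha> :: real
  assumes \<alpha>: "0 < \<alpha>" "\<alpha> < pi / 2" and "n \<ge> 1" "m \<ge> 1"
  shows "Ssum m n \<alpha> = (\<Sum>r\<le>m. cot_sum_coeff m n r * cot \<alpha> ^ r)"
proof -
  define A B V where "A = fps_of_poly (cos_tan_poly n :: real poly)"
    and "B = fps_of_poly (sin_tan_poly n :: real poly)" and "V = fps_tan_mult_arctan n"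
  have A0: "A $ 0 \<noteq> 0" by (simp add: A_def)
  have "A * V = B"
    using inverse_mult_eq_1'[OF A0]
    by (simp add: V_def A_def B_def fps_tan_mult_arctan_eq_quotient fps_divide_unit mult.left_commute)
  then have "fps_of_poly (cos_tan_poly n - smult (cot \<alpha>) (sin_tan_poly n)) = A * (1 - fps_const (cot \<alpha>) * V)"
    by (simp add: A_def B_def fps_of_poly_simps algebra_simps flip: \<open>A * V = B\<close>)
  then have "Ssum m n \<alpha> = - fps_X_log_deriv A $ m - fps_X_log_deriv (1 - fps_const (cot \<alpha>) * V) $ m"
    using Ssum_eq_neg_fps_X_log_deriv[OF assms] A0 by (simp add: fps_X_log_deriv_mult V_def)
  also have "\<dots> = - fps_X_log_deriv A $ m + (\<Sum>r=1..m. cot \<alpha> ^ r * real m / real r * (V ^ r) $ m)"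
    using \<open>m \<ge> 1\<close> by (simp add: fps_X_log_deriv_one_minus_nth V_def)
  also have "\<dots> = (\<Sum>r\<le>m. cot_sum_coeff m n r * cot \<alpha> ^ r)"
    by (simp add: cot_sum_coeff_def A_def V_def sum.atMost_shift sum.atLeast1_atMost_eq mult_ac)
  finally show ?thesis .
qed

lemma cot_sum_coeff_arctan_tan_nums:
  assumes "1 \<le> r" "r \<le> m"
  shows "cot_sum_coeff m n r =
    1 / (real r * fact (m - 1)) * (\<Sum>k=r..m. real n ^ k * arctan_num m k * tan_num k r)"
proof -
  have "(fact m :: real) = real m * fact (m - 1)"
    using assms by (simp add: fact_reduce)
  moreover have "(\<Sum>k=r..m. real n ^ k * arctan_num m k * tan_num k r)
      = fact m * (fps_tan_mult_arctan n ^ r) $ m"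
    by (simp add: fps_tan_mult_arctan_power_nth arctan_num_def tan_num_def sum_distrib_left mult_ac)
  ultimately show ?thesis
    using assms by (simp add: cot_sum_coeff_def)
qed

lemma coeffs_eq_if_poly_sums_eq_on_infinite:
  fixes a b :: "nat \<Rightarrow> 'a::idom"
  assumes "infinite S" and "\<And>x. x \<in> S \<Longrightarrow> (\<Sum>r\<le>m. a r * x ^ r) = (\<Sum>r\<le>m. b r * x ^ r)"
    and "r \<le> m"
  shows "a r = b r"
proof -
  define R where "R = (\<Sum>r\<le>m. monom (a r - b r) r)"
  have "S \<subseteq> {x. poly R x = 0}"
    using assms(2) by (auto simp: R_def poly_sum poly_monom algebra_simps sum_subtractf)
  then have "R = 0"
    using poly_roots_finite[of R] \<open>infinite S\<close> finite_subset by blast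
  then have "coeff R r = 0" by simp
  with \<open>r \<le> m\<close> show ?thesis by (simp add: R_def coeff_sum coeff_monom)
qed

lemma cot_poly_coeffs_unique:
  fixes a b :: "nat \<Rightarrow> real"
  assumes "\<And>\<alpha>. 0 < \<alpha> \<Longrightarrow> \<alpha> < pi / 2 \<Longrightarrow>
             (\<Sum>r\<le>m. a r * cot \<alpha> ^ r) = (\<Sum>r\<le>m. b r * cot \<alpha> ^ r)"
    and "r \<le> m"
  shows "a r = b r"
proof (rule coeffs_eq_if_poly_sums_eq_on_infinite[OF infinite_Ioi[of 0] _ \<open>r \<le> m\<close>])
  fix x :: real assume "x \<in> {0<..}"
  define \<alpha> where "\<alpha> = arctan (1 / x)"
  have "0 < \<alpha>" "\<alpha> < pi / 2" "cot \<alpha> = x"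
    using \<open>x \<in> {0<..}\<close> arctan_ubound[of "1 / x"]
    by (simp_all add: \<alpha>_def cot_altdef tan_arctan arctan_less_zero_iff[symmetric])
  with assms(1) show "(\<Sum>r\<le>m. a r * x ^ r) = (\<Sum>r\<le>m. b r * x ^ r)"
    by metis
qed

theorem corollary6p7:
  fixes m n :: nat and p :: "nat \<Rightarrow> nat \<Rightarrow> real"
  assumes "m \<ge> 1" and "n \<ge> 2"
    and "\<forall>M \<in> {m, 2 * m}. \<forall>\<alpha>::real. (\<forall>j::int. \<alpha> \<noteq> real_of_int j * pi) \<longrightarrow>
           Ssum M n \<alpha> = (\<Sum>r\<le>M. p M r * cot \<alpha> ^ r)"
  shows "p (2 * m) 0 = Ssum (2 * m) n (pi / 2) \<and>
    (\<forall>r \<in> {1..m}. p m r =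
           1 / (real r * fact (m - 1)) * (\<Sum>k=r..m. real n ^ k * arctan_num m k * tan_num k r))"
proof -
  have expansion: "Ssum M n \<alpha> = (\<Sum>r\<le>M. p M r * cot \<alpha> ^ r)"
    if "M \<in> {m, 2 * m}" "0 < \<alpha>" "\<alpha> < pi" for M \<alpha>
  proof -
    have "\<alpha> \<noteq> real_of_int j * pi" for j :: int
      using that by (auto simp: zero_less_mult_iff)
    with assms(3) that show ?thesis by blast
  qed
  have "Ssum (2 * m) n (pi / 2) = (\<Sum>r\<le>2 * m. p (2 * m) r * cot (pi / 2) ^ r)"
    by (rule expansion) auto
  then have "p (2 * m) 0 = Ssum (2 * m) n (pi / 2)"
    by (simp add: cot_def power_0_left if_distrib[where f = "(*) _"] cong: if_cong)
  moreover have "p m r = cot_sum_coeff m n r" if "r \<le> m" for r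
  proof (rule cot_poly_coeffs_unique[OF _ that])
    fix \<alpha> :: real assume "0 < \<alpha>" "\<alpha> < pi / 2"
    then show "(\<Sum>r\<le>m. p m r * cot \<alpha> ^ r) = (\<Sum>r\<le>m. cot_sum_coeff m n r * cot \<alpha> ^ r)"
      using expansion[of m \<alpha>] Ssum_eq_cot_poly[of \<alpha> n m] assms(1,2) by simp
  qed
  ultimately show ?thesis
    by (simp add: cot_sum_coeff_arctan_tan_nums)
qed

end
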